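(* Fix $d,k\in\mathbb N$ and let $A\in\mathbb R^{d^k\times d^k}$. Let $x=x_1\otimes\cdots\otimes x_k$, where $x_1,\dots,x_k\in\mathbb R^d$ are independent and each $x_i$ is either a Rademacher vector or a $\mathcal N(0,I_d)$ Gaussian vector. Then $$\operatorname{Var}[x^\top A x]\le\sum_{\mathcal S\subsetneq[k]}2^{k-|\mathcal S|}\,\big\|\operatorname{tr}_{\mathcal S}(A)\big\|_F^2 .$$ Furthermore, if all $x_i$ are $\mathcal N(0,I_d)$ and $A=\bar A$, then this is an equality, where $\bar A:=\frac1{2^k}\sum_{\mathcal V\subseteq[k]}A^{\Gamma_{\mathcal V}}$.
   Context: $\otimes$ is the standard Kronecker product; $[k]=\{1,\dots,k\}$. A Rademacher vector has iid entries uniform on $\{\pm1\}$. Partial trace: for $\mathcal S\subseteq[k]$, $\operatorname{tr}_{\mathcal S}:\mathbb R^{d^k\times d^k}\to\mathbb R^{d^{k-|\mathcal S|}\times d^{k-|\mathcal S|}}$ is the unique linear map with $\operatorname{tr}_{\mathcal S}(M_1\otimes\cdots\otimes M_k)=\big(\prod_{j\in\mathcal S}\operatorname{tr}(M_j)\big)\bigotimes_{j\notin\mathcal S}M_j$ for all $M_j\in\mathbb R^{d\times d}$. Partial transpose: for $\mathcal V\subseteq[k]$, $A\mapsto A^{\Gamma_{\mathcal V}}$ is the unique linear map with $(M_1\otimes\cdots\otimes M_k)^{\Gamma_{\mathcal V}}=N_1\otimes\cdots\otimes N_k$, $N_j=M_j^\top$ if $j\in\mathcal V$, $N_j=M_j$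 otherwise. The sum ranges over all proper subsets $\mathcal S$ of $[k]$ (including $\emptyset$). *)

theory Defs
  imports "HOL-Probability.Probability"
begin

text \<open>Coordinates of \<open>\<real>^(d^k)\<close> are indexed by multi-indices
  \<open>i \<in> {1..k} \<rightarrow>\<^sub>E {..<d}\<close> (the Kronecker product corresponds to the
  lexicographic ordering of these multi-indices). A matrix in \<open>\<real>^(d^k \<times> d^k)\<close>
  is a function of two multi-indices; a matrix acting on the factors \<open>K \<subseteq> {1..k}\<close>
  is indexed by multi-indices in \<open>K \<rightarrow>\<^sub>E {..<d}\<close>.\<close>

type_synonym mindex = "nat \<Rightarrow> nat"
type_synonym tmat = "mindex \<Rightarrow> mindex \<Rightarrow> real"

definition midx :: "nat set \<Rightarrow> nat \<Rightarrow> mindex set" where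
  "midx K d = K \<rightarrow>\<^sub>E {..<d}"

definition glue :: "nat set \<Rightarrow> mindex \<Rightarrow> mindex \<Rightarrow> mindex" where
  "glue S i t = (\<lambda>l. if l \<in> S then t l else i l)"

definition ptrace :: "nat \<Rightarrow> nat set \<Rightarrow> tmat \<Rightarrow> tmat" where
  "ptrace d S A = (\<lambda>i j. \<Sum>t\<in>midx S d. A (glue S i t) (glue S j t))"

definition ptransp :: "nat set \<Rightarrow> tmat \<Rightarrow> tmat" where
  "ptransp V A = (\<lambda>i j. A (glue V i j) (glue V j i))"

definition frob2 :: "nat set \<Rightarrow> nat \<Rightarrow> tmat \<Rightarrow> real" where
  "frob2 K d B = (\<Sum>i\<in>midx K d. \<Sum>j\<in>midx K d. (B i j)\<^sup>2)"

definition abar :: "nat \<Rightarrow> tmat \<Rightarrow> tmat" where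
  "abar k A = (\<lambda>i j. (1 / 2 ^ k) * (\<Sum>V\<in>Pow {1..k}. ptransp V A i j))"

definition rademacher_rv :: "'a measure \<Rightarrow> ('a \<Rightarrow> real) \<Rightarrow> bool" where
  "rademacher_rv M Y \<longleftrightarrow> Y \<in> borel_measurable M \<and>
     (AE \<omega> in M. Y \<omega> = 1 \<or> Y \<omega> = -1) \<and>
     measure M {\<omega> \<in> space M. Y \<omega> = 1} = 1 / 2"

text \<open>Tensor product vector \<open>x = x_1 \<otimes> \<dots> \<otimes> x_k\<close>, where \<open>X l a\<close> is entry \<open>a\<close> of \<open>x_l\<close>.\<close>
definition tensvec :: "nat \<Rightarrow> (nat \<Rightarrow> nat \<Rightarrow> 'a \<Rightarrow> real) \<Rightarrow> 'a \<Rightarrow> mindex \<Rightarrow> real" where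
  "tensvec k X \<omega> i = (\<Prod>l\<in>{1..k}. X l (i l) \<omega>)"

definition qform :: "nat \<Rightarrow> nat \<Rightarrow> tmat \<Rightarrow> (nat \<Rightarrow> nat \<Rightarrow> 'a \<Rightarrow> real) \<Rightarrow> 'a \<Rightarrow> real" where
  "qform d k A X \<omega> = (\<Sum>i\<in>midx {1..k} d. \<Sum>j\<in>midx {1..k} d.
      tensvec k X \<omega> i * A i j * tensvec k X \<omega> j)"

end

theory Submission
  imports Defs
begin

(*
  Expand E[(x^T A x)^2] coordinatewise. For one factor x_l, the fourth moment
  E[x_a x_b x_a' x_b'] is the sum of the three pairings (a = b, a' = b'), (a = a', b = b') and
  (a = b', b = a'), except that for a Rademacher factor the diagonal a = b = a' = b' is counted once
  instead of three times. Multiplying out over the k factors, with the first pairing chosen on S, the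
  third on V and the second on the remaining factors, the term S = [k] is (E[x^T A x])^2 and the term
  (S, V) is a weighted Frobenius inner product of tr_S(A) with its partial transpose over V. By AM-GM,
  and because partial transposition preserves the Frobenius norm, each such term is at most
  ||tr_S(A)||_F^2, and there are 2^(k - |S|) choices of V. If every factor is Gaussian all weights are 1,
  and if A = Abar then tr_S(A) is invariant under every partial transpose, so each term is equal to
  ||tr_S(A)||_F^2.
*)

lemma prod_of_bool: "finite K \<Longrightarrow> (\<Prod>l\<in>K. of_bool (P l) :: real) = of_bool (\<forall>l\<in>K. P l)"
  by (induction K rule: finite_induct) auto

lemma sum_if_const_cond: "(\<Sum>x\<in>T. if P then f x else 0) = (if P then sum f T else 0)"
  by auto

lemma prod_add3_expand:
  fixes f g h :: "'a \<Rightarrow> 'b::comm_semiring_1"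
  assumes "finite U"
  shows "(\<Prod>l\<in>U. f l + g l + h l) =
    (\<Sum>S\<in>Pow U. \<Sum>V\<in>Pow (U - S). (\<Prod>l\<in>S. f l) * ((\<Prod>l\<in>V. h l) * (\<Prod>l\<in>U - S - V. g l)))"
proof -
  have "(\<Prod>l\<in>U. f l + g l + h l) = (\<Prod>l\<in>U. f l + (h l + g l))"
    by (simp add: add_ac)
  also have "\<dots> = (\<Sum>S\<in>Pow U. (\<Prod>l\<in>S. f l) * (\<Prod>l\<in>U - S. h l + g l))"
    by (rule prod_add[OF assms])
  also have "\<dots> = (\<Sum>S\<in>Pow U. \<Sum>V\<in>Pow (U - S). (\<Prod>l\<in>S. f l) * ((\<Prod>l\<in>V. h l) * (\<Prod>l\<in>U - S - V. g l)))"
    using assms by (simp add: prod_add sum_distrib_left)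
  finally show ?thesis .
qed

lemma sum_swap_inner4:
  "(\<Sum>i\<in>I. \<Sum>j\<in>J. \<Sum>i'\<in>I'. \<Sum>j'\<in>J'. \<Sum>x\<in>E. f i j i' j' x) =
   (\<Sum>x\<in>E. \<Sum>i\<in>I. \<Sum>j\<in>J. \<Sum>i'\<in>I'. \<Sum>j'\<in>J'. f i j i' j' x)"
  by (simp only: sum.swap[where B = E])

lemma prod_list_eq_prod_count_list:
  fixes f :: "nat \<Rightarrow> 'b::comm_monoid_mult"
  assumes "set xs \<subseteq> {..<d}"
  shows "(\<Prod>x\<leftarrow>xs. f x) = (\<Prod>y<d. f y ^ count_list xs y)"
  using assms
proof (induction xs)
  case Nil
  then show ?case by simp
next
  case (Cons x xs)
  have "(\<Prod>y<d. f y ^ count_list (x # xs) y) = (\<Prod>y<d. (if x = y then f y else 1) * f y ^ count_list xs y)"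
    by (intro prod.cong) auto
  also have "\<dots> = f x * (\<Prod>y<d. f y ^ count_list xs y)"
    using Cons.prems by (simp add: prod.distrib prod.delta)
  finally show ?case
    using Cons by simp
qed

section \<open>Coordinate moments and pairings\<close>

definition std_normal_moment :: "nat \<Rightarrow> real" where
  "std_normal_moment m = (if odd m then 0 else fact m / (2 ^ (m div 2) * fact (m div 2)))"

definition rademacher_moment :: "nat \<Rightarrow> real" where
  "rademacher_moment m = (if odd m then 0 else 1)"

definition coordinate_moment :: "bool \<Rightarrow> nat \<Rightarrow> real" where
  "coordinate_moment gaussian m = (if gaussian then std_normal_moment m else rademacher_moment m)"

lemma coordinate_moment_0_to_4:
  "coordinate_moment g 0 = 1" "coordinate_moment g 1 = 0" "coordinate_moment g 2 = 1"
  "coordinate_moment g 3 = 0" "coordinate_moment g 4 = (if g then 3 else 1)"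
  by (simp_all add: coordinate_moment_def std_normal_moment_def rademacher_moment_def fact_numeral)

lemma (in prob_space) has_bochner_integral_std_normal_power:
  assumes "distributed M lborel Y std_normal_density"
  shows "has_bochner_integral M (\<lambda>\<omega>. Y \<omega> ^ m) (std_normal_moment m)"
proof -
  have density_nonneg: "\<And>x. 0 \<le> std_normal_density x"
    by (simp add: normal_density_nonneg)
  have "integrable M (\<lambda>\<omega>. Y \<omega> ^ m)"
    using distributed_integrable[OF assms, of "\<lambda>x. x ^ m"] density_nonneg
      integrable_std_normal_moment[of m]
    by simp
  moreover have "expectation (\<lambda>\<omega>. Y \<omega> ^ m) = (\<integral>x. std_normal_density x * x ^ m \<partial>lborel)"
    using distributed_integral[OF assms, of "\<lambda>x. x ^ m"] density_nonneg by simp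
  moreover have "(\<integral>x. std_normal_density x * x ^ m \<partial>lborel) = std_normal_moment m"
  proof (cases "odd m")
    case True
    then obtain q where "m = 2 * q + 1" by (metis oddE)
    then show ?thesis
      using integral_std_normal_moment_odd[of q] by (simp add: std_normal_moment_def)
  next
    case False
    then obtain q where "m = 2 * q" by (metis evenE)
    then show ?thesis
      using integral_std_normal_moment_even[of q] by (simp add: std_normal_moment_def)
  qed
  ultimately show ?thesis
    by (simp add: has_bochner_integral_iff)
qed

lemma (in prob_space) has_bochner_integral_rademacher_power:
  assumes "rademacher_rv M Y"
  shows "has_bochner_integral M (\<lambda>\<omega>. Y \<omega> ^ m) (rademacher_moment m)"
proof -
  define E where "E = {\<omega> \<in> space M. Y \<omega> = 1}"
  have [measurable]: "Y \<in> borel_measurable M" and ae: "AE \<omega> in M. Y \<omega> = 1 \<or> Y \<omega> = -1"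
    and prob_E: "prob E = 1/2"
    using assms by (auto simp: rademacher_rv_def E_def)
  have [measurable]: "E \<in> events"
    unfolding E_def by measurable
  define Z :: "'a \<Rightarrow> real" where "Z \<omega> = (if even m then 1 else 2 * indicator E \<omega> - 1)" for \<omega>
  have "AE \<omega> in M. Y \<omega> ^ m = Z \<omega>"
    using ae AE_space by eventually_elim (auto simp: Z_def E_def indicator_def)
  moreover have "has_bochner_integral M Z (rademacher_moment m)"
  proof -
    have const: "has_bochner_integral M (\<lambda>_. 1) (1 :: real)"
      by (simp add: has_bochner_integral_iff prob_space)
    then have "has_bochner_integral M (\<lambda>\<omega>. 2 * indicator E \<omega> - 1) (2 * prob E - 1 :: real)"
      by (intro has_bochner_integral_diff has_bochner_integral_mult_right
          has_bochner_integral_real_indicator) (auto simp: emeasure_eq_measure)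
    then show ?thesis
      using const prob_E by (cases "even m") (simp_all add: Z_def[abs_def] rademacher_moment_def)
  qed
  ultimately show ?thesis
    by (subst has_bochner_integral_cong_AE) (auto simp: Z_def)
qed

(* The three pairings of the fourth moment E[x_a x_b x_a' x_b'] of one coordinate vector. A Rademacher
   coordinate has fourth moment 1 instead of 3, so for g = False the diagonal a = b = a' = b' is counted
   by trace_pairing only. *)
definition trace_pairing :: "nat \<Rightarrow> nat \<Rightarrow> nat \<Rightarrow> nat \<Rightarrow> real" where
  "trace_pairing a b a' b' = of_bool (a = b \<and> a' = b')"

definition straight_pairing :: "bool \<Rightarrow> nat \<Rightarrow> nat \<Rightarrow> nat \<Rightarrow> nat \<Rightarrow> real" where
  "straight_pairing g a b a' b' = of_bool (a = a' \<and> b = b' \<and> (g \<or> a \<noteq> b))"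

definition cross_pairing :: "bool \<Rightarrow> nat \<Rightarrow> nat \<Rightarrow> nat \<Rightarrow> nat \<Rightarrow> real" where
  "cross_pairing g a b a' b' = of_bool (a = b' \<and> b = a' \<and> (g \<or> a \<noteq> b))"

lemma prod_coordinate_moment_pair:
  fixes a b d :: nat
  assumes "a < d" "b < d"
  shows "(\<Prod>y<d. coordinate_moment g (count_list [a, b] y)) = of_bool (a = b)"
proof -
  have "(\<Prod>y<d. coordinate_moment g (count_list [a, b] y)) =
      (\<Prod>y\<in>{a, b}. coordinate_moment g (count_list [a, b] y))"
    using assms by (intro prod.mono_neutral_right) (auto simp: coordinate_moment_0_to_4)
  then show ?thesis
    using coordinate_moment_0_to_4[of g] by (cases "a = b") (simp_all add: numeral_eq_Suc)
qed

lemma prod_coordinate_moment_quad: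
  fixes a b a' b' d :: nat
  assumes "a < d" "b < d" "a' < d" "b' < d"
  shows "(\<Prod>y<d. coordinate_moment g (count_list [a, b, a', b'] y)) =
    trace_pairing a b a' b' + straight_pairing g a b a' b' + cross_pairing g a b a' b'"
proof -
  have "(\<Prod>y<d. coordinate_moment g (count_list [a, b, a', b'] y)) =
      (\<Prod>y\<in>{a, b, a', b'}. coordinate_moment g (count_list [a, b, a', b'] y))"
    using assms by (intro prod.mono_neutral_right) (auto simp: coordinate_moment_0_to_4)
  then show ?thesis
    using coordinate_moment_0_to_4[of g]
    unfolding trace_pairing_def straight_pairing_def cross_pairing_def
    by (cases "a = b"; cases "a = a'"; cases "a = b'"; cases "b = a'"; cases "b = b'"; cases "a' = b'")
      (simp_all add: numeral_eq_Suc insert_commute)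
qed

section \<open>Partial traces and partial transposes\<close>

lemma midx_eqI: "i \<in> midx K d \<Longrightarrow> j \<in> midx K d \<Longrightarrow> (\<And>l. l \<in> K \<Longrightarrow> i l = j l) \<Longrightarrow> i = j"
  unfolding midx_def by (auto intro: extensionalityI[of _ K] simp: PiE_def)

lemma finite_midx [simp, intro]: "finite K \<Longrightarrow> finite (midx K d)"
  by (auto simp: midx_def intro!: finite_PiE)

lemma glue_in_midx_Un: "a \<in> midx K d \<Longrightarrow> s \<in> midx S d \<Longrightarrow> glue S a s \<in> midx (K \<union> S) d"
  by (auto simp: midx_def glue_def PiE_iff extensional_def)

lemma glue_in_midx: "a \<in> midx K d \<Longrightarrow> b \<in> midx K d \<Longrightarrow> S \<subseteq> K \<Longrightarrow> glue S a b \<in> midx K d"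
  by (auto simp: midx_def glue_def PiE_iff extensional_def)

lemma bij_betw_glue:
  assumes "K \<inter> S = {}"
  shows "bij_betw (\<lambda>(a, s). glue S a s) (midx K d \<times> midx S d) (midx (K \<union> S) d)"
proof (rule bij_betwI[where g = "\<lambda>i. (restrict i K, restrict i S)"])
  show "(\<lambda>(a, s). glue S a s) \<in> midx K d \<times> midx S d \<rightarrow> midx (K \<union> S) d"
    by (auto intro: glue_in_midx_Un)
  show "(\<lambda>i. (restrict i K, restrict i S)) \<in> midx (K \<union> S) d \<rightarrow> midx K d \<times> midx S d"
    by (auto simp: midx_def)
qed (use assms in \<open>auto simp: midx_def glue_def fun_eq_iff PiE_iff extensional_def\<close>)

lemma sum_midx_Un:
  assumes "K \<inter> S = {}"
  shows "(\<Sum>i\<in>midx (K \<union> S) d. F i) = (\<Sum>a\<in>midx K d. \<Sum>s\<in>midx S d. F (glue S a s))"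
  using sum.reindex_bij_betw[OF bij_betw_glue[OF assms, of d], of F]
  by (simp add: sum.cartesian_product case_prod_unfold)

lemma glue_glue_swap: "glue V (glue V a b) (glue V b a) = a"
  by (auto simp: glue_def fun_eq_iff)

lemma frob2_ptransp:
  assumes "V \<subseteq> K" "finite K"
  shows "frob2 K d (ptransp V B) = frob2 K d B"
proof -
  let ?swap = "\<lambda>(a, b). (glue V a b, glue V b a)"
  have "bij_betw ?swap (midx K d \<times> midx K d) (midx K d \<times> midx K d)"
    by (rule bij_betwI[where g = ?swap]) (use assms in \<open>auto simp: glue_in_midx glue_glue_swap\<close>)
  then have "(\<Sum>x\<in>midx K d \<times> midx K d. (case ?swap x of (a, b) \<Rightarrow> (B a b)\<^sup>2)) =
      (\<Sum>x\<in>midx K d \<times> midx K d. (case x of (a, b) \<Rightarrow> (B a b)\<^sup>2))"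
    by (rule sum.reindex_bij_betw)
  then show ?thesis
    by (simp add: frob2_def ptransp_def sum.cartesian_product case_prod_unfold)
qed

lemma ptransp_abar:
  assumes "V \<subseteq> {1..k}"
  shows "ptransp V (abar k A) = abar k A"
proof (intro ext)
  fix i j
  let ?symdiff = "\<lambda>W. (W - V) \<union> (V - W)"
  have "bij_betw ?symdiff (Pow {1..k}) (Pow {1..k})"
    by (rule bij_betwI[where g = ?symdiff]) (use assms in auto)
  then have "(\<Sum>W\<in>Pow {1..k}. ptransp (?symdiff W) A i j) = (\<Sum>W\<in>Pow {1..k}. ptransp W A i j)"
    by (rule sum.reindex_bij_betw)
  moreover have "glue W (glue V i j) (glue V j i) = glue (?symdiff W) i j" for W i j
    by (auto simp: glue_def fun_eq_iff)
  ultimately show "ptransp V (abar k A) i j = abar k A i j"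
    by (simp add: abar_def ptransp_def)
qed

lemma ptrace_ptransp:
  assumes "V \<inter> S = {}"
  shows "ptrace d S (ptransp V A) = ptransp V (ptrace d S A)"
proof -
  have "glue V (glue S i t) (glue S j t) = glue S (glue V i j) t" for i j t
    using assms by (auto simp: glue_def fun_eq_iff)
  then show ?thesis
    by (intro ext) (simp add: ptrace_def ptransp_def)
qed

lemma ptrace_cong_midx:
  assumes "S \<subseteq> U" "a \<in> midx (U - S) d" "b \<in> midx (U - S) d"
    and "\<And>i j. i \<in> midx U d \<Longrightarrow> j \<in> midx U d \<Longrightarrow> A i j = A' i j"
  shows "ptrace d S A a b = ptrace d S A' a b"
proof -
  have "glue S a t \<in> midx U d" "glue S b t \<in> midx U d" if "t \<in> midx S d" for t
    using glue_in_midx_Un[OF assms(2) that] glue_in_midx_Un[OF assms(3) that] assms(1)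
    by (simp_all add: Un_absorb2)
  then show ?thesis
    unfolding ptrace_def using assms(4) by (intro sum.cong) auto
qed

lemma ptransp_ptrace_eq_if_eq_abar:
  assumes A: "\<forall>i\<in>midx {1..k} d. \<forall>j\<in>midx {1..k} d. A i j = abar k A i j"
    and "S \<subseteq> {1..k}" "V \<subseteq> {1..k} - S"
    and ab: "a \<in> midx ({1..k} - S) d" "b \<in> midx ({1..k} - S) d"
  shows "ptransp V (ptrace d S A) a b = ptrace d S A a b"
proof -
  have cong: "ptrace d S A a' b' = ptrace d S (abar k A) a' b'"
    if "a' \<in> midx ({1..k} - S) d" "b' \<in> midx ({1..k} - S) d" for a' b'
    using assms(2) that A by (intro ptrace_cong_midx) auto
  have "ptransp V (ptrace d S A) a b = ptransp V (ptrace d S (abar k A)) a b"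
    unfolding ptransp_def using assms(3) ab by (intro cong glue_in_midx) auto
  also have "\<dots> = ptrace d S (ptransp V (abar k A)) a b"
    using assms(3) by (subst ptrace_ptransp) auto
  also have "\<dots> = ptrace d S (abar k A) a b"
    using assms(3) by (subst ptransp_abar) auto
  also have "\<dots> = ptrace d S A a b"
    using cong[OF ab] by simp
  finally show ?thesis .
qed

section \<open>Expansion of the fourth moment\<close>

definition differs_off_gauss :: "(nat \<Rightarrow> bool) \<Rightarrow> nat set \<Rightarrow> mindex \<Rightarrow> mindex \<Rightarrow> bool" where
  "differs_off_gauss g K a b \<longleftrightarrow> (\<forall>l\<in>K. \<not> g l \<longrightarrow> a l \<noteq> b l)"

(* For K = [k] - S and B = tr_S(A) this is the contribution of the pairing pattern (S, V) to the
   variance. *)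
definition transposed_overlap :: "nat \<Rightarrow> (nat \<Rightarrow> bool) \<Rightarrow> nat set \<Rightarrow> nat set \<Rightarrow> tmat \<Rightarrow> real" where
  "transposed_overlap d g K V B =
     (\<Sum>a\<in>midx K d. \<Sum>b\<in>midx K d. of_bool (differs_off_gauss g K a b) * B a b * ptransp V B a b)"

lemma transposed_overlap_le_frob2:
  assumes "V \<subseteq> K" "finite K"
  shows "transposed_overlap d g K V B \<le> frob2 K d B"
proof -
  have "transposed_overlap d g K V B \<le> (\<Sum>a\<in>midx K d. \<Sum>b\<in>midx K d. ((B a b)\<^sup>2 + (ptransp V B a b)\<^sup>2) / 2)"
    unfolding transposed_overlap_def
  proof (intro sum_mono)
    fix a b
    have "0 \<le> (B a b - ptransp V B a b)\<^sup>2"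
      by simp
    then show "of_bool (differs_off_gauss g K a b) * B a b * ptransp V B a b \<le>
        ((B a b)\<^sup>2 + (ptransp V B a b)\<^sup>2) / 2"
      by (auto simp: power2_eq_square algebra_simps)
  qed
  also have "\<dots> = (frob2 K d B + frob2 K d (ptransp V B)) / 2"
    by (simp add: frob2_def add_divide_distrib sum.distrib sum_divide_distrib)
  finally show ?thesis
    using frob2_ptransp[OF assms] by simp
qed

lemma transposed_overlap_eq_frob2:
  assumes "\<forall>l\<in>K. g l"
    and "\<And>a b. a \<in> midx K d \<Longrightarrow> b \<in> midx K d \<Longrightarrow> ptransp V B a b = B a b"
  shows "transposed_overlap d g K V B = frob2 K d B"
  unfolding transposed_overlap_def frob2_def differs_off_gauss_def
  using assms by (intro sum.cong refl) (simp add: power2_eq_square)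

lemma prod_pairings_glue:
  assumes "K \<inter> S = {}" "V \<subseteq> K" "finite K" "finite S"
    and K: "a \<in> midx K d" "b \<in> midx K d" "a' \<in> midx K d" "b' \<in> midx K d"
    and S: "s \<in> midx S d" "t \<in> midx S d" "s' \<in> midx S d" "t' \<in> midx S d"
  defines "i \<equiv> glue S a s" and "j \<equiv> glue S b t" and "i' \<equiv> glue S a' s'" and "j' \<equiv> glue S b' t'"
  shows "(\<Prod>l\<in>S. trace_pairing (i l) (j l) (i' l) (j' l)) *
      ((\<Prod>l\<in>V. cross_pairing (g l) (i l) (j l) (i' l) (j' l)) *
       (\<Prod>l\<in>K - V. straight_pairing (g l) (i l) (j l) (i' l) (j' l))) =
    of_bool (t = s \<and> t' = s' \<and> a' = glue V a b \<and> b' = glue V b a \<and> differs_off_gauss g K a b)"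
proof -
  have "(\<Prod>l\<in>S. trace_pairing (i l) (j l) (i' l) (j' l)) = of_bool (\<forall>l\<in>S. t l = s l \<and> t' l = s' l)"
    using assms(4) by (simp add: prod_of_bool trace_pairing_def i_def j_def i'_def j'_def glue_def eq_commute)
  also have "(\<forall>l\<in>S. t l = s l \<and> t' l = s' l) \<longleftrightarrow> t = s \<and> t' = s'"
    using midx_eqI[OF S(2,1)] midx_eqI[OF S(4,3)] by auto
  finally have trace: "(\<Prod>l\<in>S. trace_pairing (i l) (j l) (i' l) (j' l)) = of_bool (t = s \<and> t' = s')" .
  define h where "h l = (if l \<in> V then cross_pairing (g l) (i l) (j l) (i' l) (j' l)
    else straight_pairing (g l) (i l) (j l) (i' l) (j' l))" for l
  have "(\<Prod>l\<in>V. cross_pairing (g l) (i l) (j l) (i' l) (j' l)) *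
      (\<Prod>l\<in>K - V. straight_pairing (g l) (i l) (j l) (i' l) (j' l)) = (\<Prod>l\<in>K. h l)"
    using prod.subset_diff[OF assms(2,3), of h] by (simp add: h_def mult.commute)
  also have "\<dots> = (\<Prod>l\<in>K. of_bool (a' l = glue V a b l \<and> b' l = glue V b a l \<and> (\<not> g l \<longrightarrow> a l \<noteq> b l)))"
  proof (intro prod.cong refl)
    fix l assume "l \<in> K"
    then have "l \<notin> S"
      using assms(1) by auto
    then show "h l = of_bool (a' l = glue V a b l \<and> b' l = glue V b a l \<and> (\<not> g l \<longrightarrow> a l \<noteq> b l))"
      by (cases "l \<in> V")
        (auto simp: h_def cross_pairing_def straight_pairing_def i_def j_def i'_def j'_def glue_def)
  qed
  also have "\<dots> = of_bool (a' = glue V a b \<and> b' = glue V b a \<and> differs_off_gauss g K a b)"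
    using midx_eqI[OF K(3) glue_in_midx[OF K(1,2) assms(2)]] midx_eqI[OF K(4) glue_in_midx[OF K(2,1) assms(2)]]
    by (auto simp: prod_of_bool assms(3) differs_off_gauss_def)
  finally show ?thesis
    using trace by simp
qed

lemma sum_pairings_eq_transposed_overlap:
  assumes "K \<inter> S = {}" "V \<subseteq> K" "finite K" "finite S"
  shows "(\<Sum>i\<in>midx (K \<union> S) d. \<Sum>j\<in>midx (K \<union> S) d. \<Sum>i'\<in>midx (K \<union> S) d. \<Sum>j'\<in>midx (K \<union> S) d.
      A i j * A i' j' * ((\<Prod>l\<in>S. trace_pairing (i l) (j l) (i' l) (j' l)) *
        ((\<Prod>l\<in>V. cross_pairing (g l) (i l) (j l) (i' l) (j' l)) *
         (\<Prod>l\<in>K - V. straight_pairing (g l) (i l) (j l) (i' l) (j' l)))))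
    = transposed_overlap d g K V (ptrace d S A)"
  (is "?L = _")
proof -
  let ?K = "midx K d" and ?S = "midx S d"
  have "?L = (\<Sum>a\<in>?K. \<Sum>s\<in>?S. \<Sum>b\<in>?K. \<Sum>t\<in>?S. \<Sum>a'\<in>?K. \<Sum>s'\<in>?S. \<Sum>b'\<in>?K. \<Sum>t'\<in>?S.
      if t' = s' then if b' = glue V b a then if a' = glue V a b then if t = s then
        of_bool (differs_off_gauss g K a b) * A (glue S a s) (glue S b t) * A (glue S a' s') (glue S b' t')
      else 0 else 0 else 0 else 0)"
    unfolding sum_midx_Un[OF assms(1)] by (intro sum.cong refl) (simp add: prod_pairings_glue[OF assms])
  also have "\<dots> = (\<Sum>a\<in>?K. \<Sum>s\<in>?S. \<Sum>b\<in>?K. \<Sum>s'\<in>?S.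
      of_bool (differs_off_gauss g K a b) * A (glue S a s) (glue S b s) * A (glue S (glue V a b) s') (glue S (glue V b a) s'))"
    using assms(2-4) by (simp add: glue_in_midx sum_if_const_cond)
  also have "\<dots> = (\<Sum>a\<in>?K. \<Sum>b\<in>?K. \<Sum>s\<in>?S. \<Sum>s'\<in>?S.
      of_bool (differs_off_gauss g K a b) * A (glue S a s) (glue S b s) * A (glue S (glue V a b) s') (glue S (glue V b a) s'))"
    by (intro sum.cong refl sum.swap)
  also have "\<dots> = transposed_overlap d g K V (ptrace d S A)"
    unfolding transposed_overlap_def ptrace_def ptransp_def
    by (simp add: sum_distrib_left sum_distrib_right mult_ac)
  finally show ?thesis .
qed

lemma fourth_moment_minus_square_eq_overlaps:
  fixes A :: tmat and g :: "nat \<Rightarrow> bool"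
  assumes "finite U"
  shows "(\<Sum>i\<in>midx U d. \<Sum>j\<in>midx U d. \<Sum>i'\<in>midx U d. \<Sum>j'\<in>midx U d.
      A i j * A i' j' * (\<Prod>l\<in>U. trace_pairing (i l) (j l) (i' l) (j' l) +
        straight_pairing (g l) (i l) (j l) (i' l) (j' l) + cross_pairing (g l) (i l) (j l) (i' l) (j' l)))
    - (\<Sum>i\<in>midx U d. \<Sum>j\<in>midx U d. A i j * (\<Prod>l\<in>U. of_bool (i l = j l)))\<^sup>2
    = (\<Sum>S | S \<subset> U. \<Sum>V\<in>Pow (U - S). transposed_overlap d g (U - S) V (ptrace d S A))"
proof -
  let ?I = "midx U d"
  define F where "F S V = (\<Sum>i\<in>?I. \<Sum>j\<in>?I. \<Sum>i'\<in>?I. \<Sum>j'\<in>?I.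
      A i j * A i' j' * ((\<Prod>l\<in>S. trace_pairing (i l) (j l) (i' l) (j' l)) *
        ((\<Prod>l\<in>V. cross_pairing (g l) (i l) (j l) (i' l) (j' l)) *
         (\<Prod>l\<in>U - S - V. straight_pairing (g l) (i l) (j l) (i' l) (j' l)))))" for S V
  have expand: "(\<Sum>i\<in>?I. \<Sum>j\<in>?I. \<Sum>i'\<in>?I. \<Sum>j'\<in>?I.
      A i j * A i' j' * (\<Prod>l\<in>U. trace_pairing (i l) (j l) (i' l) (j' l) +
        straight_pairing (g l) (i l) (j l) (i' l) (j' l) + cross_pairing (g l) (i l) (j l) (i' l) (j' l)))
    = (\<Sum>S\<in>Pow U. \<Sum>V\<in>Pow (U - S). F S V)"
    unfolding F_def prod_add3_expand[OF assms] sum_distrib_left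
    by (subst sum_swap_inner4) (rule sum.cong[OF refl], rule sum_swap_inner4)
  have mean_square: "F U {} = (\<Sum>i\<in>?I. \<Sum>j\<in>?I. A i j * (\<Prod>l\<in>U. of_bool (i l = j l)))\<^sup>2"
  proof -
    have "(\<Sum>i\<in>?I. \<Sum>j\<in>?I. A i j * (\<Prod>l\<in>U. of_bool (i l = j l)))\<^sup>2 =
        (\<Sum>i\<in>?I. \<Sum>j\<in>?I. \<Sum>i'\<in>?I. \<Sum>j'\<in>?I.
          A i j * (\<Prod>l\<in>U. of_bool (i l = j l)) * (A i' j' * (\<Prod>l\<in>U. of_bool (i' l = j' l))))"
      unfolding power2_eq_square sum_product by (intro sum.cong refl sum.swap)
    then show ?thesis
      by (simp add: F_def trace_pairing_def of_bool_conj prod.distrib mult_ac)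
  qed
  have overlap: "(\<Sum>V\<in>Pow (U - S). F S V) =
      (\<Sum>V\<in>Pow (U - S). transposed_overlap d g (U - S) V (ptrace d S A))" if "S \<subseteq> U" for S
  proof (intro sum.cong refl)
    fix V assume "V \<in> Pow (U - S)"
    moreover have "U = (U - S) \<union> S"
      using that by auto
    ultimately show "F S V = transposed_overlap d g (U - S) V (ptrace d S A)"
      unfolding F_def using assms finite_subset[OF that assms]
      by (subst (1 2 3 4) \<open>U = (U - S) \<union> S\<close>) (intro sum_pairings_eq_transposed_overlap; auto)
  qed
  have "Pow U - {U} = {S. S \<subset> U}"
    by auto
  then have "(\<Sum>S\<in>Pow U. \<Sum>V\<in>Pow (U - S). F S V) = F U {} + (\<Sum>S | S \<subset> U. \<Sum>V\<in>Pow (U - S). F S V)"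
    using sum.remove[of "Pow U" U "\<lambda>S. \<Sum>V\<in>Pow (U - S). F S V"] assms by simp
  then show ?thesis
    using expand mean_square overlap by simp
qed

section \<open>Moments of the quadratic form\<close>

locale product_random_vector = prob_space +
  fixes d k :: nat and X :: "nat \<Rightarrow> nat \<Rightarrow> 'a \<Rightarrow> real" and gauss :: "nat \<Rightarrow> bool"
  assumes indep: "indep_vars (\<lambda>_. borel) (\<lambda>(l, a). X l a) ({1..k} \<times> {..<d})"
    and gaussian: "\<And>l a. l \<in> {1..k} \<Longrightarrow> a < d \<Longrightarrow> gauss l \<Longrightarrow>
      distributed M lborel (X l a) std_normal_density"
    and rademacher: "\<And>l a. l \<in> {1..k} \<Longrightarrow> a < d \<Longrightarrow> \<not> gauss l \<Longrightarrow> rademacher_rv M (X l a)"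
begin

lemma has_bochner_integral_coordinate_power:
  assumes "l \<in> {1..k}" "a < d"
  shows "has_bochner_integral M (\<lambda>\<omega>. X l a \<omega> ^ m) (coordinate_moment (gauss l) m)"
  using has_bochner_integral_std_normal_power[OF gaussian] has_bochner_integral_rademacher_power[OF rademacher]
    assms
  by (cases "gauss l") (simp_all add: coordinate_moment_def)

lemma has_bochner_integral_prod_coordinate_powers:
  "has_bochner_integral M (\<lambda>\<omega>. \<Prod>l\<in>{1..k}. \<Prod>y<d. X l y \<omega> ^ c l y)
     (\<Prod>l\<in>{1..k}. \<Prod>y<d. coordinate_moment (gauss l) (c l y))"
proof -
  define Z where "Z = (\<lambda>(l, y) \<omega>. X l y \<omega> ^ c l y)"
  have indep_Z: "indep_vars (\<lambda>_. borel) Z ({1..k} \<times> {..<d})"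
    using indep_vars_compose2[OF indep, of "\<lambda>(l, y) x. x ^ c l y" "\<lambda>_. borel"]
    by (simp add: Z_def case_prod_unfold)
  have Z: "has_bochner_integral M (Z i) (coordinate_moment (gauss (fst i)) (c (fst i) (snd i)))"
    if "i \<in> {1..k} \<times> {..<d}" for i
    using that has_bochner_integral_coordinate_power by (auto simp: Z_def)
  have "has_bochner_integral M (\<lambda>\<omega>. \<Prod>i\<in>{1..k} \<times> {..<d}. Z i \<omega>)
      (\<Prod>i\<in>{1..k} \<times> {..<d}. coordinate_moment (gauss (fst i)) (c (fst i) (snd i)))"
    using indep_vars_lebesgue_integral[OF _ indep_Z] indep_vars_integrable[OF _ indep_Z] Z
    by (simp add: has_bochner_integral_iff)
  then show ?thesis
    unfolding prod.cartesian_product by (simp add: Z_def case_prod_unfold)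
qed

lemma has_bochner_integral_prod_tensvec:
  assumes "set ixs \<subseteq> midx {1..k} d"
  shows "has_bochner_integral M (\<lambda>\<omega>. \<Prod>i\<leftarrow>ixs. tensvec k X \<omega> i)
     (\<Prod>l\<in>{1..k}. \<Prod>y<d. coordinate_moment (gauss l) (count_list (map (\<lambda>i. i l) ixs) y))"
proof -
  have "(\<Prod>i\<leftarrow>ixs. tensvec k X \<omega> i) = (\<Prod>l\<in>{1..k}. \<Prod>y<d. X l y \<omega> ^ count_list (map (\<lambda>i. i l) ixs) y)"
    for \<omega>
  proof -
    have "(\<Prod>i\<leftarrow>ixs. tensvec k X \<omega> i) = (\<Prod>l\<in>{1..k}. \<Prod>x\<leftarrow>map (\<lambda>i. i l) ixs. X l x \<omega>)"
      unfolding tensvec_def by (induction ixs) (simp_all add: prod.distrib)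
    also have "\<dots> = (\<Prod>l\<in>{1..k}. \<Prod>y<d. X l y \<omega> ^ count_list (map (\<lambda>i. i l) ixs) y)"
      using assms by (intro prod.cong refl prod_list_eq_prod_count_list) (auto simp: midx_def PiE_iff subset_iff)
    finally show ?thesis .
  qed
  then show ?thesis
    using has_bochner_integral_prod_coordinate_powers by simp
qed

lemma has_bochner_integral_qform:
  "has_bochner_integral M (qform d k A X)
     (\<Sum>i\<in>midx {1..k} d. \<Sum>j\<in>midx {1..k} d. A i j * (\<Prod>l\<in>{1..k}. of_bool (i l = j l)))"
proof -
  have "has_bochner_integral M (\<lambda>\<omega>. tensvec k X \<omega> i * tensvec k X \<omega> j) (\<Prod>l\<in>{1..k}. of_bool (i l = j l))"
    if ij: "i \<in> midx {1..k} d" "j \<in> midx {1..k} d" for i j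
  proof -
    have "(\<Prod>l\<in>{1..k}. \<Prod>y<d. coordinate_moment (gauss l) (count_list (map (\<lambda>i. i l) [i, j]) y)) =
        (\<Prod>l\<in>{1..k}. of_bool (i l = j l))"
      using ij by (intro prod.cong refl, simp only: list.map, intro prod_coordinate_moment_pair)
        (auto simp: midx_def)
    then show ?thesis
      using has_bochner_integral_prod_tensvec[of "[i, j]"] ij by simp
  qed
  moreover have "qform d k A X = (\<lambda>\<omega>. \<Sum>i\<in>midx {1..k} d. \<Sum>j\<in>midx {1..k} d.
      A i j * (tensvec k X \<omega> i * tensvec k X \<omega> j))"
    by (simp add: qform_def fun_eq_iff mult_ac)
  ultimately show ?thesis
    by (simp only:) (intro has_bochner_integral_sum has_bochner_integral_mult_right)
qed

lemma has_bochner_integral_qform_squared: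
  "has_bochner_integral M (\<lambda>\<omega>. (qform d k A X \<omega>)\<^sup>2)
     (\<Sum>i\<in>midx {1..k} d. \<Sum>j\<in>midx {1..k} d. \<Sum>i'\<in>midx {1..k} d. \<Sum>j'\<in>midx {1..k} d.
        A i j * A i' j' * (\<Prod>l\<in>{1..k}. trace_pairing (i l) (j l) (i' l) (j' l) +
          straight_pairing (gauss l) (i l) (j l) (i' l) (j' l) + cross_pairing (gauss l) (i l) (j l) (i' l) (j' l)))"
proof -
  let ?I = "midx {1..k} d"
  let ?x = "tensvec k X"
  have square: "(qform d k A X \<omega>)\<^sup>2 =
      (\<Sum>i\<in>?I. \<Sum>j\<in>?I. \<Sum>i'\<in>?I. \<Sum>j'\<in>?I. A i j * A i' j' * (\<Prod>i\<leftarrow>[i, j, i', j']. ?x \<omega> i))" for \<omega>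
  proof -
    have "(qform d k A X \<omega>)\<^sup>2 =
        (\<Sum>i\<in>?I. \<Sum>j\<in>?I. \<Sum>i'\<in>?I. \<Sum>j'\<in>?I. (?x \<omega> i * A i j * ?x \<omega> j) * (?x \<omega> i' * A i' j' * ?x \<omega> j'))"
      unfolding qform_def power2_eq_square sum_product by (intro sum.cong refl sum.swap)
    then show ?thesis
      by (simp add: mult_ac)
  qed
  have "has_bochner_integral M (\<lambda>\<omega>. \<Prod>i\<leftarrow>[i, j, i', j']. ?x \<omega> i)
      (\<Prod>l\<in>{1..k}. trace_pairing (i l) (j l) (i' l) (j' l) +
          straight_pairing (gauss l) (i l) (j l) (i' l) (j' l) + cross_pairing (gauss l) (i l) (j l) (i' l) (j' l))"
    if ijs: "i \<in> ?I" "j \<in> ?I" "i' \<in> ?I" "j' \<in> ?I" for i j i' j'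
  proof -
    have "(\<Prod>l\<in>{1..k}. \<Prod>y<d. coordinate_moment (gauss l) (count_list (map (\<lambda>i. i l) [i, j, i', j']) y)) =
        (\<Prod>l\<in>{1..k}. trace_pairing (i l) (j l) (i' l) (j' l) +
          straight_pairing (gauss l) (i l) (j l) (i' l) (j' l) + cross_pairing (gauss l) (i l) (j l) (i' l) (j' l))"
      using ijs by (intro prod.cong refl, simp only: list.map, intro prod_coordinate_moment_quad)
        (auto simp: midx_def)
    then show ?thesis
      using has_bochner_integral_prod_tensvec[of "[i, j, i', j']"] ijs by simp
  qed
  then show ?thesis
    unfolding square by (intro has_bochner_integral_sum has_bochner_integral_mult_right)
qed

lemma variance_qform:
  "variance (qform d k A X) =
    (\<Sum>S | S \<subset> {1..k}. \<Sum>V\<in>Pow ({1..k} - S). transposed_overlap d gauss ({1..k} - S) V (ptrace d S A))"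
  using variance_eq[of "qform d k A X"] has_bochner_integral_qform[of A] has_bochner_integral_qform_squared[of A]
    fourth_moment_minus_square_eq_overlaps[where U = "{1..k}" and g = gauss]
  by (simp add: has_bochner_integral_iff)

end

theorem theorem2:
  fixes M :: "'a measure" and d k :: nat and A :: tmat
    and X :: "nat \<Rightarrow> nat \<Rightarrow> 'a \<Rightarrow> real"
    and gauss :: "nat \<Rightarrow> bool"
  assumes "prob_space M"
    and indep: "prob_space.indep_vars M (\<lambda>_. borel) (\<lambda>(l, a). X l a) ({1..k} \<times> {..<d})"
    and gaussian: "\<And>l a. l \<in> {1..k} \<Longrightarrow> a < d \<Longrightarrow> gauss l \<Longrightarrow>
                      distributed M lborel (X l a) std_normal_density"
    and rademacher: "\<And>l a. l \<in> {1..k} \<Longrightarrow> a < d \<Longrightarrow> \<not> gauss l \<Longrightarrow>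
                      rademacher_rv M (X l a)"
  shows "prob_space.variance M (qform d k A X)
           \<le> (\<Sum>S | S \<subset> {1..k}. 2 ^ (k - card S) * frob2 ({1..k} - S) d (ptrace d S A))
         \<and> ((\<forall>l\<in>{1..k}. gauss l) \<and> (\<forall>i\<in>midx {1..k} d. \<forall>j\<in>midx {1..k} d. A i j = abar k A i j) \<longrightarrow>
             prob_space.variance M (qform d k A X)
               = (\<Sum>S | S \<subset> {1..k}. 2 ^ (k - card S) * frob2 ({1..k} - S) d (ptrace d S A)))"
proof -
  interpret product_random_vector M d k X gauss
    using assms by (simp add: product_random_vector_def product_random_vector_axioms_def)
  have "variance (qform d k A X) \<le>
      (\<Sum>S | S \<subset> {1..k}. \<Sum>V\<in>Pow ({1..k} - S). frob2 ({1..k} - S) d (ptrace d S A))"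
    unfolding variance_qform by (intro sum_mono transposed_overlap_le_frob2) auto
  moreover have "variance (qform d k A X) =
      (\<Sum>S | S \<subset> {1..k}. \<Sum>V\<in>Pow ({1..k} - S). frob2 ({1..k} - S) d (ptrace d S A))"
    if "\<forall>l\<in>{1..k}. gauss l" "\<forall>i\<in>midx {1..k} d. \<forall>j\<in>midx {1..k} d. A i j = abar k A i j"
    unfolding variance_qform using that
    by (intro sum.cong refl transposed_overlap_eq_frob2 ptransp_ptrace_eq_if_eq_abar) auto
  moreover have "(\<Sum>S | S \<subset> {1..k}. \<Sum>V\<in>Pow ({1..k} - S). frob2 ({1..k} - S) d (ptrace d S A)) =
      (\<Sum>S | S \<subset> {1..k}. 2 ^ (k - card S) * frob2 ({1..k} - S) d (ptrace d S A))"
    by (intro sum.cong refl) (auto simp: card_Pow card_Diff_subset finite_subset)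
  ultimately show ?thesis
    by simp
qed

end
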